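(* Let $G=(V,E)$ be a finite graph with nonnegative interactions $J$, and let $\mu$ be the Ising measure with no external field. Then for any vertices $u,v_1,\dots,v_k\in V$, $$\mathbb E_\mu[\sigma(u)\mid \sigma(v_i)=1\text{ for all }1\le i\le k]\le\sum_{i=1}^k\mathbb E_\mu[\sigma(u)\mid\sigma(v_i)=1].$$
   Context: The Ising measure with no external field is $\mu(\sigma)=Z^{-1}\exp(\sum_{uv\in E}J_{uv}\sigma(u)\sigma(v))$ on $\{\pm1\}^V$, $J_{uv}\ge0$. *)

theory Defs
  imports Complex_Main "HOL-Library.FuncSet"
begin

definition graph :: "'a set \<Rightarrow> 'a set set \<Rightarrow> bool" where
  "graph V E \<longleftrightarrow> finite V \<and> (\<forall>e\<in>E. e \<subseteq> V \<and> card e = 2)"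

definition configs :: "'a set \<Rightarrow> ('a \<Rightarrow> int) set" where
  "configs V = V \<rightarrow>\<^sub>E {-1, 1}"

definition ising_weight :: "'a set set \<Rightarrow> ('a set \<Rightarrow> real) \<Rightarrow> ('a \<Rightarrow> int) \<Rightarrow> real" where
  "ising_weight E J \<sigma> = exp (\<Sum>e\<in>E. J e * real_of_int (\<Prod>x\<in>e. \<sigma> x))"

definition ising_Z :: "'a set \<Rightarrow> 'a set set \<Rightarrow> ('a set \<Rightarrow> real) \<Rightarrow> real" where
  "ising_Z V E J = (\<Sum>\<sigma>\<in>configs V. ising_weight E J \<sigma>)"

definition ising_mu :: "'a set \<Rightarrow> 'a set set \<Rightarrow> ('a set \<Rightarrow> real) \<Rightarrow> ('a \<Rightarrow> int) \<Rightarrow> real" where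
  "ising_mu V E J \<sigma> = ising_weight E J \<sigma> / ising_Z V E J"

definition ising_cond_exp ::
  "'a set \<Rightarrow> 'a set set \<Rightarrow> ('a set \<Rightarrow> real) \<Rightarrow> (('a \<Rightarrow> int) \<Rightarrow> real) \<Rightarrow> (('a \<Rightarrow> int) \<Rightarrow> bool) \<Rightarrow> real" where
  "ising_cond_exp V E J f A =
     (\<Sum>\<sigma>\<in>{\<sigma>\<in>configs V. A \<sigma>}. f \<sigma> * ising_mu V E J \<sigma>) /
     (\<Sum>\<sigma>\<in>{\<sigma>\<in>configs V. A \<sigma>}. ising_mu V E J \<sigma>)"

end

theory Submission
  imports Defs
begin

text \<open>
  Let m(T) be the conditional magnetisation of u given that all spins on T equal +1.
  Pinning one more vertex b changes it by cov_T(\<sigma>(u), \<sigma>(b)) / (1 + <\<sigma>(b)>_T),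
  which by the first two Griffiths inequalities lies between 0 and cov_T(\<sigma>(u), \<sigma>(b)).
  Pinning a vertex acts as an infinite external field there, so by the GHS inequality this
  covariance can only decrease as T grows; hence it is at most the unpinned covariance
  <\<sigma>(u) \<sigma>(b)>, which equals m({b}) by spin-flip symmetry.

  All three correlation inequalities come from one positivity statement about four independent
  replicas of the pinned measure (the rotation trick of Ellis, Monroe and Newman): in the rotated
  variables \<alpha> = (s1 + s2 + s3 + s4)/2, \<beta> = (s1 + s2 - s3 - s4)/2, \<gamma>, \<delta> the replica
  energy is a nonnegative combination of products of rotated variables, and every monomial in
  \<alpha>, \<beta>, \<gamma>, \<delta> has a nonnegative sum over {-1, 1}^4.
\<close>

section \<open>Rotated variables of four spins\<close>

type_synonym quad = "int \<times> int \<times> int \<times> int"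

definition rot_alpha :: "quad \<Rightarrow> real" where
  "rot_alpha t = (case t of (a, b, c, d) \<Rightarrow> real_of_int (a + b + c + d) / 2)"

definition rot_beta :: "quad \<Rightarrow> real" where
  "rot_beta t = (case t of (a, b, c, d) \<Rightarrow> real_of_int (a + b - c - d) / 2)"

definition rot_gamma :: "quad \<Rightarrow> real" where
  "rot_gamma t = (case t of (a, b, c, d) \<Rightarrow> real_of_int (a - b + c - d) / 2)"

definition rot_delta :: "quad \<Rightarrow> real" where
  "rot_delta t = (case t of (a, b, c, d) \<Rightarrow> real_of_int (- a + b + c - d) / 2)"

definition spins4 :: "quad set" where
  "spins4 = {-1, 1} \<times> {-1, 1} \<times> {-1, 1} \<times> {-1, 1}"

definition rot_monomial :: "nat \<Rightarrow> nat \<Rightarrow> nat \<Rightarrow> nat \<Rightarrow> quad \<Rightarrow> real" where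
  "rot_monomial a b c d t = rot_alpha t ^ a * rot_beta t ^ b * rot_gamma t ^ c * rot_delta t ^ d"

lemma mem_spins4:
  "t \<in> spins4 \<longleftrightarrow>
    fst t \<in> {-1, 1} \<and> fst (snd t) \<in> {-1, 1} \<and> fst (snd (snd t)) \<in> {-1, 1} \<and> snd (snd (snd t)) \<in> {-1, 1}"
  by (simp only: spins4_def mem_Times_iff)

lemma spins4_explicit:
  "spins4 = {(-1,-1,-1,-1), (-1,-1,-1,1), (-1,-1,1,-1), (-1,-1,1,1),
             (-1,1,-1,-1), (-1,1,-1,1), (-1,1,1,-1), (-1,1,1,1),
             (1,-1,-1,-1), (1,-1,-1,1), (1,-1,1,-1), (1,-1,1,1),
             (1,1,-1,-1), (1,1,-1,1), (1,1,1,-1), (1,1,1,1)}"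
  unfolding spins4_def by auto

text \<open>The rotation maps \<open>spins4\<close> onto the eight points \<open>\<plusminus>2 e\<^sub>i\<close> and eight points of
  \<open>{-1, 1}\<^sup>4\<close>; the two groups of terms are nonnegative separately.\<close>

lemma rot_monomial_sum_nonneg: "0 \<le> (\<Sum>t\<in>spins4. rot_monomial a b c d t)"
proof -
  define X where "X = (-1::real) ^ a"
  define Y where "Y = (-1::real) ^ b"
  define Z where "Z = (-1::real) ^ c"
  define W where "W = (-1::real) ^ d"
  have sum_eq: "(\<Sum>t\<in>spins4. rot_monomial a b c d t) =
      (2^a + (-2)^a) * (0^b * 0^c * 0^d) + (2^b + (-2)^b) * (0^a * 0^c * 0^d)
    + (2^c + (-2)^c) * (0^a * 0^b * 0^d) + (2^d + (-2)^d) * (0^a * 0^b * 0^c)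
    + ((1 + X * Y) * (1 + Z * W) + (X + Y) * (Z + W))"
    unfolding spins4_explicit rot_monomial_def rot_alpha_def rot_beta_def rot_gamma_def
      rot_delta_def X_def Y_def Z_def W_def
    by (simp add: algebra_simps)
  have sign: "(-1::real) ^ n \<in> {-1, 1}" for n
    by (cases "even n") auto
  have pow2: "0 \<le> (2::real) ^ n + (-2) ^ n" for n
    by (cases "even n") (simp_all add: power_minus[of 2])
  have "0 \<le> (1 + X * Y) * (1 + Z * W) + (X + Y) * (Z + W)"
    using sign[of a] sign[of b] sign[of c] sign[of d] unfolding X_def Y_def Z_def W_def by auto
  moreover have "0 \<le> (2^a + (-2)^a) * ((0::real)^b * 0^c * 0^d)"
    "0 \<le> (2^b + (-2)^b) * ((0::real)^a * 0^c * 0^d)"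
    "0 \<le> (2^c + (-2)^c) * ((0::real)^a * 0^b * 0^d)"
    "0 \<le> (2^d + (-2)^d) * ((0::real)^a * 0^b * 0^c)"
    by (intro mult_nonneg_nonneg pow2; simp)+
  ultimately show ?thesis unfolding sum_eq by linarith
qed

inductive_set rot_cone :: "(quad \<Rightarrow> real) set" where
  monomial: "rot_monomial a b c d \<in> rot_cone"
| add: "f \<in> rot_cone \<Longrightarrow> g \<in> rot_cone \<Longrightarrow> (\<lambda>t. f t + g t) \<in> rot_cone"
| scale: "f \<in> rot_cone \<Longrightarrow> 0 \<le> c \<Longrightarrow> (\<lambda>t. c * f t) \<in> rot_cone"

lemma rot_monomial_mult:
  "(\<lambda>t. rot_monomial a b c d t * rot_monomial a' b' c' d' t) =
    rot_monomial (a + a') (b + b') (c + c') (d + d')"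
  unfolding rot_monomial_def by (simp add: power_add fun_eq_iff algebra_simps)

lemma rot_cone_mult_monomial: "f \<in> rot_cone \<Longrightarrow> (\<lambda>t. f t * rot_monomial a b c d t) \<in> rot_cone"
proof (induction rule: rot_cone.induct)
  case (monomial a' b' c' d')
  then show ?case by (simp add: rot_monomial_mult rot_cone.monomial)
next
  case (add f g)
  then show ?case using rot_cone.add[OF add.IH] by (simp add: distrib_right)
next
  case (scale f c)
  then show ?case using rot_cone.scale[OF scale.IH scale.hyps(2)] by (simp add: mult.assoc)
qed

lemma rot_cone_mult:
  assumes f: "f \<in> rot_cone"
  shows "g \<in> rot_cone \<Longrightarrow> (\<lambda>t. f t * g t) \<in> rot_cone"
proof (induction g rule: rot_cone.induct)
  case (monomial a b c d)
  then show ?case by (rule rot_cone_mult_monomial[OF f])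
next
  case (add g h)
  then show ?case using rot_cone.add[OF add.IH] by (simp add: distrib_left)
next
  case (scale g c)
  then show ?case using rot_cone.scale[OF scale.IH scale.hyps(2)] by (simp add: algebra_simps)
qed

lemma rot_cone_nonneg: "f \<in> rot_cone \<Longrightarrow> 0 \<le> (\<Sum>t\<in>spins4. f t) \<and> 0 \<le> f (1, 1, 1, 1)"
proof (induction rule: rot_cone.induct)
  case (monomial a b c d)
  then show ?case
    using rot_monomial_sum_nonneg[of a b c d]
    by (simp add: rot_monomial_def rot_alpha_def rot_beta_def rot_gamma_def rot_delta_def)
next
  case (add f g)
  then show ?case by (simp add: sum.distrib)
next
  case (scale f c)
  then show ?case by (simp add: sum_distrib_left[symmetric])
qed

lemma rot_cone_one: "(\<lambda>t. 1) \<in> rot_cone"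
  using rot_cone.monomial[of 0 0 0 0] by (simp add: rot_monomial_def[abs_def])

lemma rot_cone_alpha: "rot_alpha \<in> rot_cone"
  using rot_cone.monomial[of 1 0 0 0] by (simp add: rot_monomial_def[abs_def])

lemma rot_cone_beta: "rot_beta \<in> rot_cone"
  using rot_cone.monomial[of 0 1 0 0] by (simp add: rot_monomial_def[abs_def])

lemma rot_cone_gamma: "rot_gamma \<in> rot_cone"
  using rot_cone.monomial[of 0 0 1 0] by (simp add: rot_monomial_def[abs_def])

lemma rot_cone_delta: "rot_delta \<in> rot_cone"
  using rot_cone.monomial[of 0 0 0 1] by (simp add: rot_monomial_def[abs_def])

section \<open>Positive functions of site-wise rotated variables\<close>

definition site_spins :: "'v set \<Rightarrow> 'v \<Rightarrow> quad set" where
  "site_spins T x = (if x \<in> T then {(1, 1, 1, 1)} else spins4)"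

inductive_set site_cone :: "'v set \<Rightarrow> (('v \<Rightarrow> quad) \<Rightarrow> real) set" for V where
  prod: "(\<And>x. x \<in> V \<Longrightarrow> g x \<in> rot_cone) \<Longrightarrow> (\<lambda>s. \<Prod>x\<in>V. g x (s x)) \<in> site_cone V"
| add: "f \<in> site_cone V \<Longrightarrow> h \<in> site_cone V \<Longrightarrow> (\<lambda>s. f s + h s) \<in> site_cone V"
| scale: "f \<in> site_cone V \<Longrightarrow> 0 \<le> c \<Longrightarrow> (\<lambda>s. c * f s) \<in> site_cone V"

lemma site_cone_mult_prod:
  "f \<in> site_cone V \<Longrightarrow> (\<And>x. x \<in> V \<Longrightarrow> g x \<in> rot_cone) \<Longrightarrow>
    (\<lambda>s. f s * (\<Prod>x\<in>V. g x (s x))) \<in> site_cone V"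
proof (induction rule: site_cone.induct)
  case (prod g')
  have "(\<lambda>s. \<Prod>x\<in>V. (\<lambda>t. g' x t * g x t) (s x)) \<in> site_cone V"
    by (rule site_cone.prod) (simp add: rot_cone_mult prod)
  then show ?case by (simp add: prod.distrib)
next
  case (add f h)
  then show ?case using site_cone.add[OF add.IH] by (simp add: distrib_right)
next
  case (scale f c)
  then show ?case using site_cone.scale[OF scale.IH scale.hyps(2)] by (simp add: mult.assoc)
qed

lemma site_cone_mult:
  assumes f: "f \<in> site_cone V"
  shows "h \<in> site_cone V \<Longrightarrow> (\<lambda>s. f s * h s) \<in> site_cone V"
proof (induction h rule: site_cone.induct)
  case (prod g)
  then show ?case by (rule site_cone_mult_prod[OF f])
next
  case (add g h)
  then show ?case using site_cone.add[OF add.IH] by (simp add: distrib_left)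
next
  case (scale g c)
  then show ?case using site_cone.scale[OF scale.IH scale.hyps(2)] by (simp add: algebra_simps)
qed

lemma site_cone_sum_nonneg:
  assumes "finite V"
  shows "f \<in> site_cone V \<Longrightarrow> 0 \<le> (\<Sum>s\<in>PiE V (site_spins T). f s)"
proof (induction rule: site_cone.induct)
  case (prod g)
  have "(\<Sum>s\<in>PiE V (site_spins T). \<Prod>x\<in>V. g x (s x)) = (\<Prod>x\<in>V. \<Sum>t\<in>site_spins T x. g x t)"
    by (rule prod_sum_PiE[symmetric]) (use assms in \<open>auto simp: site_spins_def spins4_def\<close>)
  also have "0 \<le> \<dots>"
    by (rule prod_nonneg) (use rot_cone_nonneg[OF prod] in \<open>auto simp: site_spins_def\<close>)
  finally show ?case .
next
  case (add f h)
  then show ?case by (simp add: sum.distrib)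
next
  case (scale f c)
  then show ?case by (simp add: sum_distrib_left[symmetric])
qed

lemma site_cone_const: "finite V \<Longrightarrow> 0 \<le> c \<Longrightarrow> (\<lambda>s. c) \<in> site_cone V"
  using site_cone.scale[OF site_cone.prod[of V "\<lambda>x t. 1"]] rot_cone_one by simp

lemma site_cone_prod_sites:
  assumes "finite V" "e \<subseteq> V" "\<phi> \<in> rot_cone"
  shows "(\<lambda>s. \<Prod>z\<in>e. \<phi> (s z)) \<in> site_cone V"
proof -
  have "(\<lambda>s. \<Prod>z\<in>V. (if z \<in> e then \<phi> else (\<lambda>t. 1)) (s z)) \<in> site_cone V"
    by (rule site_cone.prod) (use assms rot_cone_one in auto)
  moreover have "(\<Prod>z\<in>V. (if z \<in> e then \<phi> else (\<lambda>t. 1)) (s z)) = (\<Prod>z\<in>e. \<phi> (s z))" for s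
  proof -
    have "(\<Prod>z\<in>V. (if z \<in> e then \<phi> else (\<lambda>t. 1)) (s z)) = (\<Prod>z\<in>V. if z \<in> e then \<phi> (s z) else 1)"
      by (rule prod.cong) auto
    also have "\<dots> = (\<Prod>z\<in>V \<inter> e. \<phi> (s z))"
      by (rule prod.inter_restrict[OF assms(1), symmetric])
    also have "V \<inter> e = e" using assms(2) by auto
    finally show ?thesis .
  qed
  ultimately show ?thesis by simp
qed

lemma site_cone_site: "finite V \<Longrightarrow> x \<in> V \<Longrightarrow> \<phi> \<in> rot_cone \<Longrightarrow> (\<lambda>s. \<phi> (s x)) \<in> site_cone V"
  using site_cone_prod_sites[of V "{x}" \<phi>] by simp

lemma site_cone_sum:
  assumes "finite V" "finite I" "\<And>i. i \<in> I \<Longrightarrow> f i \<in> site_cone V"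
  shows "(\<lambda>s. \<Sum>i\<in>I. f i s) \<in> site_cone V"
  using assms(2,3)
proof (induction I rule: finite_induct)
  case empty
  then show ?case using site_cone_const[OF assms(1), of 0] by simp
next
  case (insert i I)
  then show ?case using site_cone.add[of "f i" V "\<lambda>s. \<Sum>i\<in>I. f i s"] by simp
qed

lemma site_cone_power:
  assumes "finite V" "f \<in> site_cone V"
  shows "(\<lambda>s. f s ^ n) \<in> site_cone V"
proof (induction n)
  case 0
  then show ?case using site_cone_const[OF assms(1), of 1] by simp
next
  case (Suc n)
  then show ?case using site_cone_mult[OF assms(2) Suc.IH] by simp
qed

text \<open>Each partial sum of the exponential series is in the cone.\<close>

lemma site_cone_exp_sum_nonneg:
  assumes V: "finite V" and f: "f \<in> site_cone V" and Q: "Q \<in> site_cone V"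
  shows "0 \<le> (\<Sum>s\<in>PiE V (site_spins T). f s * exp (Q s))"
proof -
  have sums: "(\<lambda>n. \<Sum>s\<in>PiE V (site_spins T). f s * (Q s ^ n / fact n))
      sums (\<Sum>s\<in>PiE V (site_spins T). f s * exp (Q s))"
  proof (intro sums_sum sums_mult)
    fix s
    show "(\<lambda>n. Q s ^ n / fact n) sums exp (Q s)"
      using exp_converges[of "Q s"] by (simp add: real_scaleR_def divide_inverse_commute)
  qed
  have "0 \<le> (\<Sum>s\<in>PiE V (site_spins T). f s * (Q s ^ n / fact n))" for n
  proof -
    have "(\<lambda>s. (1 / fact n) * (f s * Q s ^ n)) \<in> site_cone V"
      by (rule site_cone.scale[OF site_cone_mult[OF f site_cone_power[OF V Q]]]) simp
    then show ?thesis
      using site_cone_sum_nonneg[OF V] by (simp add: mult_ac)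
  qed
  then show ?thesis by (rule sums_le[OF _ sums_zero sums])
qed

section \<open>Four replicas of the pinned Ising model\<close>

type_synonym 'v replicas = "('v \<Rightarrow> int) \<times> ('v \<Rightarrow> int) \<times> ('v \<Rightarrow> int) \<times> ('v \<Rightarrow> int)"

definition pinned :: "'v set \<Rightarrow> 'v set \<Rightarrow> ('v \<Rightarrow> int) set" where
  "pinned V T = {\<sigma> \<in> configs V. \<forall>x\<in>T. \<sigma> x = 1}"

definition pinned4 :: "'v set \<Rightarrow> 'v set \<Rightarrow> 'v replicas set" where
  "pinned4 V T = pinned V T \<times> pinned V T \<times> pinned V T \<times> pinned V T"

definition to_sites :: "'v set \<Rightarrow> 'v replicas \<Rightarrow> ('v \<Rightarrow> quad)" where
  "to_sites V \<sigma> = restrict (\<lambda>x. (fst \<sigma> x, fst (snd \<sigma>) x, fst (snd (snd \<sigma>)) x, snd (snd (snd \<sigma>)) x)) V"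

definition to_replicas :: "'v set \<Rightarrow> ('v \<Rightarrow> quad) \<Rightarrow> 'v replicas" where
  "to_replicas V s = (restrict (\<lambda>x. fst (s x)) V, restrict (\<lambda>x. fst (snd (s x))) V,
     restrict (\<lambda>x. fst (snd (snd (s x)))) V, restrict (\<lambda>x. snd (snd (snd (s x)))) V)"

lemma to_sites_mem:
  assumes "\<sigma> \<in> pinned4 V T"
  shows "to_sites V \<sigma> \<in> PiE V (site_spins T)"
proof -
  obtain s1 s2 s3 s4 where \<sigma>: "\<sigma> = (s1, s2, s3, s4)"
    and s: "s1 \<in> pinned V T" "s2 \<in> pinned V T" "s3 \<in> pinned V T" "s4 \<in> pinned V T"
    using assms by (cases \<sigma>) (auto simp: pinned4_def)
  have "(s1 x, s2 x, s3 x, s4 x) \<in> site_spins T x" if "x \<in> V" for x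
  proof (cases "x \<in> T")
    case True
    then show ?thesis using s by (simp add: pinned_def site_spins_def)
  next
    case False
    have "s' x \<in> {-1, 1}" if "s' \<in> pinned V T" for s'
      using that \<open>x \<in> V\<close> by (auto simp: pinned_def configs_def)
    then show ?thesis using s False by (simp add: site_spins_def mem_spins4 del: insert_iff)
  qed
  then show ?thesis by (simp add: to_sites_def \<sigma> restrict_PiE_iff)
qed

lemma to_replicas_mem:
  assumes "T \<subseteq> V" "s \<in> PiE V (site_spins T)"
  shows "to_replicas V s \<in> pinned4 V T"
proof -
  have "s x \<in> spins4" if "x \<in> V" for x
    using assms that PiE_mem[OF assms(2) that] by (cases "x \<in> T") (auto simp: site_spins_def mem_spins4)
  moreover have "s x = (1, 1, 1, 1)" if "x \<in> T" for x
    using assms that PiE_mem[OF assms(2), of x] by (auto simp: site_spins_def)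
  ultimately show ?thesis
    using assms(1)
    unfolding to_replicas_def pinned4_def pinned_def configs_def
    by (auto simp: mem_spins4 simp del: insert_iff)
qed

lemma to_sites_bij:
  assumes "T \<subseteq> V"
  shows "bij_betw (to_sites V) (pinned4 V T) (PiE V (site_spins T))"
proof (rule bij_betw_byWitness[where f' = "to_replicas V"])
  show "\<forall>\<sigma>\<in>pinned4 V T. to_replicas V (to_sites V \<sigma>) = \<sigma>"
  proof
    fix \<sigma> assume "\<sigma> \<in> pinned4 V T"
    then obtain s1 s2 s3 s4 where \<sigma>: "\<sigma> = (s1, s2, s3, s4)"
      and s: "s1 \<in> configs V" "s2 \<in> configs V" "s3 \<in> configs V" "s4 \<in> configs V"
      by (cases \<sigma>) (auto simp: pinned4_def pinned_def)
    have "restrict (\<lambda>x. fst (to_sites V \<sigma> x)) V = restrict s1 V"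
      "restrict (\<lambda>x. fst (snd (to_sites V \<sigma> x))) V = restrict s2 V"
      "restrict (\<lambda>x. fst (snd (snd (to_sites V \<sigma> x)))) V = restrict s3 V"
      "restrict (\<lambda>x. snd (snd (snd (to_sites V \<sigma> x)))) V = restrict s4 V"
      by (auto intro!: restrict_ext simp: to_sites_def \<sigma>)
    with s show "to_replicas V (to_sites V \<sigma>) = \<sigma>"
      by (simp add: to_replicas_def \<sigma> configs_def PiE_restrict)
  qed
  show "\<forall>s\<in>PiE V (site_spins T). to_sites V (to_replicas V s) = s"
  proof
    fix s assume "s \<in> PiE V (site_spins T)"
    moreover have "to_sites V (to_replicas V s) = restrict s V"
      unfolding to_sites_def to_replicas_def by (rule restrict_ext) simp
    ultimately show "to_sites V (to_replicas V s) = s" by (simp add: PiE_restrict)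
  qed
  show "to_sites V ` pinned4 V T \<subseteq> PiE V (site_spins T)"
    using to_sites_mem by blast
  show "to_replicas V ` PiE V (site_spins T) \<subseteq> pinned4 V T"
    using to_replicas_mem[OF assms] by blast
qed

definition rot_energy :: "'v set set \<Rightarrow> ('v set \<Rightarrow> real) \<Rightarrow> ('v \<Rightarrow> quad) \<Rightarrow> real" where
  "rot_energy E J s = (\<Sum>e\<in>E. J e * ((\<Prod>z\<in>e. rot_alpha (s z)) + (\<Prod>z\<in>e. rot_beta (s z))
     + (\<Prod>z\<in>e. rot_gamma (s z)) + (\<Prod>z\<in>e. rot_delta (s z))))"

definition replica_weight :: "'v set set \<Rightarrow> ('v set \<Rightarrow> real) \<Rightarrow> 'v replicas \<Rightarrow> real" where
  "replica_weight E J \<sigma> = ising_weight E J (fst \<sigma>) * ising_weight E J (fst (snd \<sigma>)) *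
     ising_weight E J (fst (snd (snd \<sigma>))) * ising_weight E J (snd (snd (snd \<sigma>)))"

lemma rot_inner:
  "rot_alpha t * rot_alpha t' + rot_beta t * rot_beta t' + rot_gamma t * rot_gamma t'
     + rot_delta t * rot_delta t' =
   real_of_int (fst t * fst t') + real_of_int (fst (snd t) * fst (snd t'))
     + real_of_int (fst (snd (snd t)) * fst (snd (snd t')))
     + real_of_int (snd (snd (snd t)) * snd (snd (snd t')))"
  by (cases t; cases t') (simp add: rot_alpha_def rot_beta_def rot_gamma_def rot_delta_def field_simps)

lemma exp_rot_energy:
  assumes "graph V E"
  shows "exp (rot_energy E J (to_sites V \<sigma>)) = replica_weight E J \<sigma>"
proof -
  obtain s1 s2 s3 s4 where \<sigma>: "\<sigma> = (s1, s2, s3, s4)" by (cases \<sigma>) auto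
  let ?s = "to_sites V \<sigma>"
  have edge: "(\<Prod>z\<in>e. rot_alpha (?s z)) + (\<Prod>z\<in>e. rot_beta (?s z))
      + (\<Prod>z\<in>e. rot_gamma (?s z)) + (\<Prod>z\<in>e. rot_delta (?s z))
    = real_of_int (\<Prod>x\<in>e. s1 x) + real_of_int (\<Prod>x\<in>e. s2 x)
      + real_of_int (\<Prod>x\<in>e. s3 x) + real_of_int (\<Prod>x\<in>e. s4 x)"
    if "e \<in> E" for e
  proof -
    from assms that have "e \<subseteq> V" "card e = 2" by (auto simp: graph_def)
    then obtain x y where "e = {x, y}" "x \<noteq> y" "x \<in> V" "y \<in> V" by (auto simp: card_2_iff)
    then show ?thesis using rot_inner[of "?s x" "?s y"] by (simp add: to_sites_def \<sigma>)
  qed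
  have "rot_energy E J ?s = (\<Sum>e\<in>E. J e * real_of_int (\<Prod>x\<in>e. s1 x))
      + (\<Sum>e\<in>E. J e * real_of_int (\<Prod>x\<in>e. s2 x)) + (\<Sum>e\<in>E. J e * real_of_int (\<Prod>x\<in>e. s3 x))
      + (\<Sum>e\<in>E. J e * real_of_int (\<Prod>x\<in>e. s4 x))"
    unfolding rot_energy_def by (simp add: edge distrib_left sum.distrib cong: sum.cong)
  then show ?thesis by (simp add: replica_weight_def ising_weight_def \<sigma> exp_add[symmetric])
qed

lemma rot_energy_in_site_cone:
  assumes "graph V E" "\<forall>e\<in>E. J e \<ge> 0"
  shows "rot_energy E J \<in> site_cone V"
proof -
  have fin: "finite V" "finite E"
    using assms(1) finite_subset[of E "Pow V"] by (auto simp: graph_def)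
  have "(\<lambda>s. J e * ((\<Prod>z\<in>e. rot_alpha (s z)) + (\<Prod>z\<in>e. rot_beta (s z))
      + (\<Prod>z\<in>e. rot_gamma (s z)) + (\<Prod>z\<in>e. rot_delta (s z)))) \<in> site_cone V"
    if "e \<in> E" for e
  proof -
    have e: "e \<subseteq> V" using assms(1) that by (auto simp: graph_def)
    show ?thesis
      using assms(2) that
        site_cone.scale[OF site_cone.add[OF site_cone.add[OF site_cone.add[OF
          site_cone_prod_sites[OF fin(1) e rot_cone_alpha] site_cone_prod_sites[OF fin(1) e rot_cone_beta]]
          site_cone_prod_sites[OF fin(1) e rot_cone_gamma]] site_cone_prod_sites[OF fin(1) e rot_cone_delta]],
          of "J e"]
      by simp
  qed
  then show ?thesis
    unfolding rot_energy_def[abs_def] by (rule site_cone_sum[OF fin])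
qed

lemma replica_sum_nonneg:
  assumes "graph V E" "\<forall>e\<in>E. J e \<ge> 0" "T \<subseteq> V" "F \<in> site_cone V"
  shows "0 \<le> (\<Sum>\<sigma>\<in>pinned4 V T. F (to_sites V \<sigma>) * replica_weight E J \<sigma>)"
proof -
  have "(\<Sum>\<sigma>\<in>pinned4 V T. F (to_sites V \<sigma>) * replica_weight E J \<sigma>)
      = (\<Sum>\<sigma>\<in>pinned4 V T. (\<lambda>s. F s * exp (rot_energy E J s)) (to_sites V \<sigma>))"
    by (simp add: exp_rot_energy[OF assms(1)])
  also have "\<dots> = (\<Sum>s\<in>PiE V (site_spins T). F s * exp (rot_energy E J s))"
    by (rule sum.reindex_bij_betw[OF to_sites_bij[OF assms(3)]])
  also have "0 \<le> \<dots>"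
    using assms by (intro site_cone_exp_sum_nonneg rot_energy_in_site_cone) (auto simp: graph_def)
  finally show ?thesis .
qed

section \<open>Replica moments\<close>

lemma sum_Times_mult:
  fixes f :: "'a \<Rightarrow> 'c::semiring_0"
  shows "(\<Sum>x\<in>A \<times> B. f (fst x) * g (snd x)) = sum f A * sum g B"
  unfolding sum_product sum.cartesian_product by (simp add: split_def)

lemma sum_Times4_mult:
  fixes f1 :: "'a \<Rightarrow> 'e::comm_semiring_0"
  shows "(\<Sum>x\<in>A \<times> B \<times> C \<times> D. f1 (fst x) * f2 (fst (snd x)) * f3 (fst (snd (snd x))) * f4 (snd (snd (snd x))))
    = sum f1 A * sum f2 B * sum f3 C * sum f4 D"
proof -
  have "(\<Sum>x\<in>A \<times> B \<times> C \<times> D. f1 (fst x) * f2 (fst (snd x)) * f3 (fst (snd (snd x))) * f4 (snd (snd (snd x))))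
    = (\<Sum>x\<in>A \<times> B \<times> C \<times> D. f1 (fst x) * (\<lambda>y. f2 (fst y) * (\<lambda>z. f3 (fst z) * f4 (snd z)) (snd y)) (snd x))"
    by (simp only: mult.assoc)
  also have "\<dots> = sum f1 A * (\<Sum>y\<in>B \<times> C \<times> D. f2 (fst y) * (\<lambda>z. f3 (fst z) * f4 (snd z)) (snd y))"
    by (rule sum_Times_mult)
  also have "(\<Sum>y\<in>B \<times> C \<times> D. f2 (fst y) * (\<lambda>z. f3 (fst z) * f4 (snd z)) (snd y))
      = sum f2 B * (\<Sum>z\<in>C \<times> D. f3 (fst z) * f4 (snd z))"
    by (rule sum_Times_mult)
  also have "(\<Sum>z\<in>C \<times> D. f3 (fst z) * f4 (snd z)) = sum f3 C * sum f4 D"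
    by (rule sum_Times_mult)
  finally show ?thesis by (simp only: mult.assoc)
qed

lemma sum_product3:
  fixes x :: "'a \<Rightarrow> 'e::comm_semiring_0"
  shows "sum x P * sum y Q * sum z R * k = (\<Sum>p\<in>P. \<Sum>q\<in>Q. \<Sum>r\<in>R. x p * y q * z r * k)"
proof -
  have "sum x P * sum y Q = (\<Sum>p\<in>P. \<Sum>q\<in>Q. x p * y q)"
    by (rule sum_product)
  then have "sum x P * sum y Q * sum z R * k = (\<Sum>p\<in>P. \<Sum>q\<in>Q. x p * y q) * (sum z R * k)"
    by (simp only: mult.assoc)
  also have "\<dots> = (\<Sum>p\<in>P. \<Sum>q\<in>Q. x p * y q * (sum z R * k))"
    by (simp only: sum_distrib_right)
  also have "\<dots> = (\<Sum>p\<in>P. \<Sum>q\<in>Q. \<Sum>r\<in>R. x p * y q * z r * k)"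
    by (intro sum.cong refl) (simp add: sum_distrib_left sum_distrib_right mult.assoc)
  finally show ?thesis .
qed

definition pinned_sum ::
  "'v set \<Rightarrow> 'v set set \<Rightarrow> ('v set \<Rightarrow> real) \<Rightarrow> 'v set \<Rightarrow> (('v \<Rightarrow> int) \<Rightarrow> real) \<Rightarrow> real" where
  "pinned_sum V E J T f = (\<Sum>\<sigma>\<in>pinned V T. f \<sigma> * ising_weight E J \<sigma>)"

abbreviation replica_ids :: "nat set" where
  "replica_ids \<equiv> {0, 1, 2, 3}"

definition replica :: "nat \<Rightarrow> 'v replicas \<Rightarrow> ('v \<Rightarrow> int)" where
  "replica p \<sigma> = (if p = 0 then fst \<sigma> else if p = 1 then fst (snd \<sigma>)
     else if p = 2 then fst (snd (snd \<sigma>)) else snd (snd (snd \<sigma>)))"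

lemma replica_sum_triple:
  assumes "p \<in> replica_ids" "q \<in> replica_ids" "r \<in> replica_ids"
  shows "(\<Sum>\<sigma>\<in>pinned4 V T. fa (replica p \<sigma>) * fb (replica q \<sigma>) * fc (replica r \<sigma>) * replica_weight E J \<sigma>)
    = (\<Prod>c\<in>replica_ids. pinned_sum V E J T
        (\<lambda>\<omega>. (if p = c then fa \<omega> else 1) * (if q = c then fb \<omega> else 1) * (if r = c then fc \<omega> else 1)))"
proof -
  let ?g = "\<lambda>c \<omega>. (if p = c then fa \<omega> else 1) * (if q = c then fb \<omega> else 1)
    * (if r = c then fc \<omega> else 1) * ising_weight E J \<omega>"
  have factor: "fa (replica p \<sigma>) * fb (replica q \<sigma>) * fc (replica r \<sigma>) * replica_weight E J \<sigma>
     = ?g 0 (fst \<sigma>) * ?g 1 (fst (snd \<sigma>)) * ?g 2 (fst (snd (snd \<sigma>))) * ?g 3 (snd (snd (snd \<sigma>)))" for \<sigma>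
    using assms by (auto simp: replica_def replica_weight_def mult_ac)
  have "(\<Sum>\<sigma>\<in>pinned4 V T. fa (replica p \<sigma>) * fb (replica q \<sigma>) * fc (replica r \<sigma>) * replica_weight E J \<sigma>)
     = (\<Sum>\<sigma>\<in>pinned4 V T. ?g 0 (fst \<sigma>) * ?g 1 (fst (snd \<sigma>)) * ?g 2 (fst (snd (snd \<sigma>))) * ?g 3 (snd (snd (snd \<sigma>))))"
    by (simp only: factor)
  also have "\<dots> = sum (?g 0) (pinned V T) * sum (?g 1) (pinned V T) * sum (?g 2) (pinned V T) * sum (?g 3) (pinned V T)"
    unfolding pinned4_def by (rule sum_Times4_mult)
  finally show ?thesis by (simp add: pinned_sum_def mult.assoc)
qed

lemma replica_sum_trilinear:
  "(\<Sum>\<sigma>\<in>pinned4 V T. (\<Sum>p\<in>replica_ids. ca p * fa (replica p \<sigma>)) * (\<Sum>p\<in>replica_ids. cb p * fb (replica p \<sigma>))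
      * (\<Sum>p\<in>replica_ids. cc p * fc (replica p \<sigma>)) * replica_weight E J \<sigma>)
   = (\<Sum>p\<in>replica_ids. \<Sum>q\<in>replica_ids. \<Sum>r\<in>replica_ids. (ca p * cb q * cc r) *
      (\<Prod>c\<in>replica_ids. pinned_sum V E J T
        (\<lambda>\<omega>. (if p = c then fa \<omega> else 1) * (if q = c then fb \<omega> else 1) * (if r = c then fc \<omega> else 1))))"
proof -
  let ?X = "\<lambda>p q r \<sigma>. fa (replica p \<sigma>) * fb (replica q \<sigma>) * fc (replica r \<sigma>) * replica_weight E J \<sigma>"
  have "(\<Sum>p\<in>replica_ids. ca p * fa (replica p \<sigma>)) * (\<Sum>p\<in>replica_ids. cb p * fb (replica p \<sigma>))
      * (\<Sum>p\<in>replica_ids. cc p * fc (replica p \<sigma>)) * replica_weight E J \<sigma>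
    = (\<Sum>p\<in>replica_ids. \<Sum>q\<in>replica_ids. \<Sum>r\<in>replica_ids. (ca p * cb q * cc r) * ?X p q r \<sigma>)" for \<sigma>
    unfolding sum_product3 by (intro sum.cong refl) (simp add: mult_ac)
  then have "(\<Sum>\<sigma>\<in>pinned4 V T. (\<Sum>p\<in>replica_ids. ca p * fa (replica p \<sigma>)) * (\<Sum>p\<in>replica_ids. cb p * fb (replica p \<sigma>))
      * (\<Sum>p\<in>replica_ids. cc p * fc (replica p \<sigma>)) * replica_weight E J \<sigma>)
    = (\<Sum>\<sigma>\<in>pinned4 V T. \<Sum>p\<in>replica_ids. \<Sum>q\<in>replica_ids. \<Sum>r\<in>replica_ids. (ca p * cb q * cc r) * ?X p q r \<sigma>)"
    by simp
  also have "\<dots> = (\<Sum>p\<in>replica_ids. \<Sum>q\<in>replica_ids. \<Sum>r\<in>replica_ids. \<Sum>\<sigma>\<in>pinned4 V T. (ca p * cb q * cc r) * ?X p q r \<sigma>)"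
    by (simp only: sum.swap[of _ "pinned4 V T"])
  also have "\<dots> = (\<Sum>p\<in>replica_ids. \<Sum>q\<in>replica_ids. \<Sum>r\<in>replica_ids. (ca p * cb q * cc r) *
      (\<Prod>c\<in>replica_ids. pinned_sum V E J T
        (\<lambda>\<omega>. (if p = c then fa \<omega> else 1) * (if q = c then fb \<omega> else 1) * (if r = c then fc \<omega> else 1))))"
    by (intro sum.cong refl) (simp only: sum_distrib_left[symmetric] replica_sum_triple)
  finally show ?thesis .
qed

definition coef_beta :: "nat \<Rightarrow> real" where
  "coef_beta p = (if p = 0 \<or> p = 1 then 1 else -1)"

definition coef_gamma :: "nat \<Rightarrow> real" where
  "coef_gamma p = (if p = 0 \<or> p = 2 then 1 else -1)"

definition coef_delta :: "nat \<Rightarrow> real" where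
  "coef_delta p = (if p = 1 \<or> p = 2 then 1 else -1)"

lemma rot_alpha_to_sites:
  "u \<in> V \<Longrightarrow> rot_alpha (to_sites V \<sigma> u) = (\<Sum>p\<in>replica_ids. 1/2 * real_of_int (replica p \<sigma> u))"
  by (simp add: rot_alpha_def to_sites_def replica_def)

lemma rot_beta_to_sites:
  "u \<in> V \<Longrightarrow> rot_beta (to_sites V \<sigma> u) = (\<Sum>p\<in>replica_ids. coef_beta p / 2 * real_of_int (replica p \<sigma> u))"
  by (simp add: rot_beta_def to_sites_def replica_def coef_beta_def diff_divide_distrib)

lemma rot_gamma_to_sites:
  "u \<in> V \<Longrightarrow> rot_gamma (to_sites V \<sigma> u) = (\<Sum>p\<in>replica_ids. coef_gamma p / 2 * real_of_int (replica p \<sigma> u))"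
  by (simp add: rot_gamma_def to_sites_def replica_def coef_gamma_def diff_divide_distrib)

lemma rot_delta_to_sites:
  "u \<in> V \<Longrightarrow> rot_delta (to_sites V \<sigma> u) = (\<Sum>p\<in>replica_ids. coef_delta p / 2 * real_of_int (replica p \<sigma> u))"
  by (simp add: rot_delta_def to_sites_def replica_def coef_delta_def diff_divide_distrib)

context
  fixes V :: "'v set" and E :: "'v set set" and J :: "'v set \<Rightarrow> real"
begin

abbreviation "Zpin T \<equiv> pinned_sum V E J T (\<lambda>\<omega>. 1)"
abbreviation "N1 T x \<equiv> pinned_sum V E J T (\<lambda>\<omega>. real_of_int (\<omega> x))"
abbreviation "N2 T x y \<equiv> pinned_sum V E J T (\<lambda>\<omega>. real_of_int (\<omega> x) * real_of_int (\<omega> y))"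
abbreviation "N3 T x y z \<equiv>
  pinned_sum V E J T (\<lambda>\<omega>. real_of_int (\<omega> x) * real_of_int (\<omega> y) * real_of_int (\<omega> z))"

lemma replica_sum_alpha:
  assumes "u \<in> V"
  shows "(\<Sum>\<sigma>\<in>pinned4 V T. rot_alpha (to_sites V \<sigma> u) * replica_weight E J \<sigma>) = 2 * Zpin T ^ 3 * N1 T u"
proof -
  \<comment> \<open>the two constant factors, each equal to 1, give the trilinear shape\<close>
  have "(\<Sum>\<sigma>\<in>pinned4 V T. rot_alpha (to_sites V \<sigma> u) * replica_weight E J \<sigma>)
    = (\<Sum>\<sigma>\<in>pinned4 V T. (\<Sum>p\<in>replica_ids. 1/2 * real_of_int (replica p \<sigma> u))
        * (\<Sum>p\<in>replica_ids. 1/4 * 1) * (\<Sum>p\<in>replica_ids. 1/4 * 1) * replica_weight E J \<sigma>)"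
    using assms by (simp add: rot_alpha_to_sites)
  also have "\<dots> = 2 * Zpin T ^ 3 * N1 T u"
    unfolding replica_sum_trilinear[where ca = "\<lambda>p. 1/2" and cb = "\<lambda>p. 1/4" and cc = "\<lambda>p. 1/4"
      and fa = "\<lambda>\<omega>. real_of_int (\<omega> u)" and fb = "\<lambda>\<omega>. 1" and fc = "\<lambda>\<omega>. 1"]
    by simp (simp add: field_simps power2_eq_square power3_eq_cube)
  finally show ?thesis .
qed

lemma replica_sum_beta_beta:
  assumes "u \<in> V" "b \<in> V"
  shows "(\<Sum>\<sigma>\<in>pinned4 V T. rot_beta (to_sites V \<sigma> u) * rot_beta (to_sites V \<sigma> b) * replica_weight E J \<sigma>)
    = Zpin T ^ 2 * (Zpin T * N2 T u b - N1 T u * N1 T b)"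
proof -
  have "(\<Sum>\<sigma>\<in>pinned4 V T. rot_beta (to_sites V \<sigma> u) * rot_beta (to_sites V \<sigma> b) * replica_weight E J \<sigma>)
    = (\<Sum>\<sigma>\<in>pinned4 V T. (\<Sum>p\<in>replica_ids. coef_beta p / 2 * real_of_int (replica p \<sigma> u))
        * (\<Sum>p\<in>replica_ids. coef_beta p / 2 * real_of_int (replica p \<sigma> b))
        * (\<Sum>p\<in>replica_ids. 1/4 * 1) * replica_weight E J \<sigma>)"
    using assms by (simp add: rot_beta_to_sites)
  also have "\<dots> = Zpin T ^ 2 * (Zpin T * N2 T u b - N1 T u * N1 T b)"
    unfolding replica_sum_trilinear[where ca = "\<lambda>p. coef_beta p / 2" and cb = "\<lambda>p. coef_beta p / 2"
      and cc = "\<lambda>p. 1/4" and fa = "\<lambda>\<omega>. real_of_int (\<omega> u)" and fb = "\<lambda>\<omega>. real_of_int (\<omega> b)"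
      and fc = "\<lambda>\<omega>. 1"]
    by (simp add: coef_beta_def) (simp add: field_simps power2_eq_square)
  finally show ?thesis .
qed

lemma replica_sum_beta_gamma_delta:
  assumes "u \<in> V" "b \<in> V" "a \<in> V"
  shows "(\<Sum>\<sigma>\<in>pinned4 V T. rot_beta (to_sites V \<sigma> u) * rot_gamma (to_sites V \<sigma> b) * rot_delta (to_sites V \<sigma> a)
      * replica_weight E J \<sigma>)
    = - (1/2) * Zpin T * (Zpin T ^ 2 * N3 T u b a
        - Zpin T * (N2 T u b * N1 T a + N2 T u a * N1 T b + N2 T b a * N1 T u)
        + 2 * N1 T u * N1 T b * N1 T a)"
proof -
  have "(\<Sum>\<sigma>\<in>pinned4 V T. rot_beta (to_sites V \<sigma> u) * rot_gamma (to_sites V \<sigma> b) * rot_delta (to_sites V \<sigma> a)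
      * replica_weight E J \<sigma>)
    = (\<Sum>\<sigma>\<in>pinned4 V T. (\<Sum>p\<in>replica_ids. coef_beta p / 2 * real_of_int (replica p \<sigma> u))
        * (\<Sum>p\<in>replica_ids. coef_gamma p / 2 * real_of_int (replica p \<sigma> b))
        * (\<Sum>p\<in>replica_ids. coef_delta p / 2 * real_of_int (replica p \<sigma> a)) * replica_weight E J \<sigma>)"
    using assms by (simp only: rot_beta_to_sites rot_gamma_to_sites rot_delta_to_sites)
  also have "\<dots> = - (1/2) * Zpin T * (Zpin T ^ 2 * N3 T u b a
        - Zpin T * (N2 T u b * N1 T a + N2 T u a * N1 T b + N2 T b a * N1 T u)
        + 2 * N1 T u * N1 T b * N1 T a)"
    unfolding replica_sum_trilinear[where ca = "\<lambda>p. coef_beta p / 2" and cb = "\<lambda>p. coef_gamma p / 2"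
      and cc = "\<lambda>p. coef_delta p / 2" and fa = "\<lambda>\<omega>. real_of_int (\<omega> u)"
      and fb = "\<lambda>\<omega>. real_of_int (\<omega> b)" and fc = "\<lambda>\<omega>. real_of_int (\<omega> a)"]
    by (simp add: coef_beta_def coef_gamma_def coef_delta_def) (simp add: field_simps power2_eq_square)
  finally show ?thesis .
qed

section \<open>Correlation inequalities and pinning\<close>

definition spin_flip :: "('v \<Rightarrow> int) \<Rightarrow> ('v \<Rightarrow> int)" where
  "spin_flip \<sigma> = restrict (\<lambda>x. - \<sigma> x) V"

lemma spin_flip_bij: "bij_betw spin_flip (configs V) (configs V)"
proof -
  have inv: "\<forall>\<sigma>\<in>configs V. spin_flip (spin_flip \<sigma>) = \<sigma>"
    by (auto simp: spin_flip_def configs_def PiE_def extensional_def fun_eq_iff)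
  have img: "spin_flip ` configs V \<subseteq> configs V"
    by (auto simp: spin_flip_def configs_def)
  show ?thesis by (rule bij_betw_byWitness[OF inv inv img img])
qed

definition cond_mag :: "'v set \<Rightarrow> 'v \<Rightarrow> real" where
  "cond_mag T u = N1 T u / Zpin T"

definition trunc_corr :: "'v set \<Rightarrow> 'v \<Rightarrow> 'v \<Rightarrow> real" where
  "trunc_corr T u b = (Zpin T * N2 T u b - N1 T u * N1 T b) / Zpin T ^ 2"

text \<open>Z, N_x, N_xy, N_xyz stand for pinned sums over T. Pinning a further vertex a replaces each
  pinned sum X by (X + X \<sigma>(a))/2, which gives the left-hand side. Multiplied out, the difference
  of the two sides is (Z + N_a) times minus the GHS expression plus a product of two
  Griffiths II expressions.\<close>

lemma covariance_pinning_le: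
  fixes Z Na Nu Nb Nub Nua Nba Nuba :: real
  assumes "0 < Z" "0 \<le> Na"
    and ghs: "Z\<^sup>2 * Nuba - Z * (Nub * Na + Nua * Nb + Nba * Nu) + 2 * Nu * Nb * Na \<le> 0"
    and "Nu * Na \<le> Z * Nua" "Nb * Na \<le> Z * Nba"
  shows "((Z + Na) / 2 * ((Nub + Nuba) / 2) - (Nu + Nua) / 2 * ((Nb + Nba) / 2)) / ((Z + Na) / 2)\<^sup>2
    \<le> (Z * Nub - Nu * Nb) / Z\<^sup>2"
proof -
  have "(Z + Na)\<^sup>2 * (Z * Nub - Nu * Nb) - Z\<^sup>2 * ((Z + Na) * (Nub + Nuba) - (Nu + Nua) * (Nb + Nba))
    = (Z + Na) * - (Z\<^sup>2 * Nuba - Z * (Nub * Na + Nua * Nb + Nba * Nu) + 2 * Nu * Nb * Na)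
      + (Z * Nua - Nu * Na) * (Z * Nba - Nb * Na)"
    by (simp add: algebra_simps power2_eq_square)
  moreover have "0 \<le> (Z + Na) * - (Z\<^sup>2 * Nuba - Z * (Nub * Na + Nua * Nb + Nba * Nu) + 2 * Nu * Nb * Na)"
    using assms(1,2) ghs by (intro mult_nonneg_nonneg) auto
  moreover have "0 \<le> (Z * Nua - Nu * Na) * (Z * Nba - Nb * Na)"
    using assms(4,5) by simp
  ultimately have "Z\<^sup>2 * ((Z + Na) * (Nub + Nuba) - (Nu + Nua) * (Nb + Nba)) \<le> (Z + Na)\<^sup>2 * (Z * Nub - Nu * Nb)"
    by linarith
  moreover have "0 < Z + Na" using assms(1,2) by simp
  ultimately have "((Z + Na) * (Nub + Nuba) - (Nu + Nua) * (Nb + Nba)) / (Z + Na)\<^sup>2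
      \<le> (Z * Nub - Nu * Nb) / Z\<^sup>2"
    using assms(1) by (simp add: field_simps)
  moreover have "(Z + Na) / 2 * ((Nub + Nuba) / 2) - (Nu + Nua) / 2 * ((Nb + Nba) / 2)
      = ((Z + Na) * (Nub + Nuba) - (Nu + Nua) * (Nb + Nba)) / 4"
    by (simp add: field_simps)
  ultimately show ?thesis by (simp add: power_divide)
qed

context
  assumes graph: "graph V E" and J_nonneg: "\<forall>e\<in>E. J e \<ge> 0"
begin

lemma finite_vertices: "finite V"
  using graph by (simp add: graph_def)

lemma finite_pinned: "finite (pinned V T)"
  using finite_vertices by (simp add: pinned_def configs_def finite_PiE)

lemma Zpin_pos:
  assumes "T \<subseteq> V"
  shows "0 < Zpin T"
proof -
  have "restrict (\<lambda>x. 1) V \<in> pinned V T"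
    using assms by (auto simp: pinned_def configs_def)
  then show ?thesis
    unfolding pinned_sum_def by (intro sum_pos finite_pinned) (auto simp: ising_weight_def)
qed

lemma griffiths_first:
  assumes "T \<subseteq> V" "x \<in> V"
  shows "0 \<le> N1 T x"
proof -
  have "0 \<le> (\<Sum>\<sigma>\<in>pinned4 V T. rot_alpha (to_sites V \<sigma> x) * replica_weight E J \<sigma>)"
    by (rule replica_sum_nonneg[OF graph J_nonneg assms(1)
          site_cone_site[OF finite_vertices assms(2) rot_cone_alpha]])
  then have "0 \<le> 2 * Zpin T ^ 3 * N1 T x"
    by (simp only: replica_sum_alpha[OF assms(2)])
  then show ?thesis using Zpin_pos[OF assms(1)] by (simp add: zero_le_mult_iff)
qed

lemma griffiths_second:
  assumes "T \<subseteq> V" "x \<in> V" "y \<in> V"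
  shows "N1 T x * N1 T y \<le> Zpin T * N2 T x y"
proof -
  have "0 \<le> (\<Sum>\<sigma>\<in>pinned4 V T. rot_beta (to_sites V \<sigma> x) * rot_beta (to_sites V \<sigma> y) * replica_weight E J \<sigma>)"
    by (rule replica_sum_nonneg[OF graph J_nonneg assms(1) site_cone_mult[OF
          site_cone_site[OF finite_vertices assms(2) rot_cone_beta]
          site_cone_site[OF finite_vertices assms(3) rot_cone_beta]]])
  then have "0 \<le> Zpin T ^ 2 * (Zpin T * N2 T x y - N1 T x * N1 T y)"
    by (simp only: replica_sum_beta_beta[OF assms(2,3)])
  then show ?thesis using Zpin_pos[OF assms(1)] by (simp add: zero_le_mult_iff)
qed

lemma ghs_inequality:
  assumes "T \<subseteq> V" "u \<in> V" "b \<in> V" "a \<in> V"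
  shows "Zpin T ^ 2 * N3 T u b a - Zpin T * (N2 T u b * N1 T a + N2 T u a * N1 T b + N2 T b a * N1 T u)
    + 2 * N1 T u * N1 T b * N1 T a \<le> 0"
proof -
  have "0 \<le> (\<Sum>\<sigma>\<in>pinned4 V T. rot_beta (to_sites V \<sigma> u) * rot_gamma (to_sites V \<sigma> b)
      * rot_delta (to_sites V \<sigma> a) * replica_weight E J \<sigma>)"
    by (rule replica_sum_nonneg[OF graph J_nonneg assms(1) site_cone_mult[OF site_cone_mult[OF
          site_cone_site[OF finite_vertices assms(2) rot_cone_beta]
          site_cone_site[OF finite_vertices assms(3) rot_cone_gamma]]
          site_cone_site[OF finite_vertices assms(4) rot_cone_delta]]])
  then have "0 \<le> - (1/2) * Zpin T * (Zpin T ^ 2 * N3 T u b a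
      - Zpin T * (N2 T u b * N1 T a + N2 T u a * N1 T b + N2 T b a * N1 T u) + 2 * N1 T u * N1 T b * N1 T a)"
    by (simp only: replica_sum_beta_gamma_delta[OF assms(2,3,4)])
  then show ?thesis using Zpin_pos[OF assms(1)] by (auto simp: mult_le_0_iff zero_le_mult_iff)
qed

lemma pinned_sum_insert:
  assumes "a \<in> V"
  shows "pinned_sum V E J (insert a T) f = (pinned_sum V E J T f + pinned_sum V E J T (\<lambda>\<omega>. f \<omega> * real_of_int (\<omega> a))) / 2"
proof -
  have "pinned V (insert a T) = {\<sigma> \<in> pinned V T. \<sigma> a = 1}"
    by (auto simp: pinned_def)
  then have "pinned_sum V E J (insert a T) f = (\<Sum>\<sigma>\<in>pinned V T. if \<sigma> a = 1 then f \<sigma> * ising_weight E J \<sigma> else 0)"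
    unfolding pinned_sum_def by (simp add: sum.inter_filter[OF finite_pinned])
  also have "\<dots> = (\<Sum>\<sigma>\<in>pinned V T. (f \<sigma> * ising_weight E J \<sigma> + f \<sigma> * real_of_int (\<sigma> a) * ising_weight E J \<sigma>) / 2)"
  proof (rule sum.cong[OF refl])
    fix \<sigma> assume "\<sigma> \<in> pinned V T"
    then have "\<sigma> a \<in> {-1, 1}" using assms by (auto simp: pinned_def configs_def)
    then show "(if \<sigma> a = 1 then f \<sigma> * ising_weight E J \<sigma> else 0)
      = (f \<sigma> * ising_weight E J \<sigma> + f \<sigma> * real_of_int (\<sigma> a) * ising_weight E J \<sigma>) / 2"
      by auto
  qed
  also have "\<dots> = (pinned_sum V E J T f + pinned_sum V E J T (\<lambda>\<omega>. f \<omega> * real_of_int (\<omega> a))) / 2"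
    unfolding pinned_sum_def by (simp add: sum_divide_distrib[symmetric] sum.distrib)
  finally show ?thesis .
qed

lemma ising_weight_spin_flip: "ising_weight E J (spin_flip \<sigma>) = ising_weight E J \<sigma>"
proof -
  have "(\<Prod>x\<in>e. spin_flip \<sigma> x) = (\<Prod>x\<in>e. \<sigma> x)" if "e \<in> E" for e
  proof -
    from graph that have "e \<subseteq> V" "card e = 2" by (auto simp: graph_def)
    then obtain x y where "e = {x, y}" "x \<noteq> y" "x \<in> V" "y \<in> V" by (auto simp: card_2_iff)
    then show ?thesis by (simp add: spin_flip_def)
  qed
  then show ?thesis unfolding ising_weight_def by (simp cong: sum.cong)
qed

lemma N1_empty:
  assumes "x \<in> V"
  shows "N1 {} x = 0"
proof -
  have unpinned: "pinned V {} = configs V" by (simp add: pinned_def)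
  have "N1 {} x = (\<Sum>\<sigma>\<in>configs V. real_of_int (spin_flip \<sigma> x) * ising_weight E J (spin_flip \<sigma>))"
    unfolding pinned_sum_def unpinned by (rule sum.reindex_bij_betw[OF spin_flip_bij, symmetric])
  also have "\<dots> = - N1 {} x"
    unfolding pinned_sum_def unpinned using assms
    by (simp only: ising_weight_spin_flip) (simp add: spin_flip_def sum_negf)
  finally show ?thesis by simp
qed

lemma trunc_corr_insert_le:
  assumes "T \<subseteq> V" "a \<in> V" "u \<in> V" "b \<in> V"
  shows "trunc_corr (insert a T) u b \<le> trunc_corr T u b"
  unfolding trunc_corr_def pinned_sum_insert[OF assms(2)] mult_1_left
  using assms
  by (intro covariance_pinning_le Zpin_pos griffiths_first ghs_inequality griffiths_second)

lemma trunc_corr_le_unpinned: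
  assumes "finite T" "T \<subseteq> V" "u \<in> V" "b \<in> V"
  shows "trunc_corr T u b \<le> trunc_corr {} u b"
  using assms(1,2)
proof (induction T rule: finite_induct)
  case empty
  then show ?case by simp
next
  case (insert a T)
  then have "trunc_corr (insert a T) u b \<le> trunc_corr T u b"
    using assms by (intro trunc_corr_insert_le) auto
  also have "\<dots> \<le> trunc_corr {} u b" using insert by auto
  finally show ?case .
qed

lemma cond_mag_empty: "u \<in> V \<Longrightarrow> cond_mag {} u = 0"
  by (simp add: cond_mag_def N1_empty)

lemma cond_mag_singleton:
  assumes "u \<in> V" "b \<in> V"
  shows "cond_mag {b} u = trunc_corr {} u b"
  using Zpin_pos[of "{}"] assms
  by (simp add: cond_mag_def trunc_corr_def pinned_sum_insert N1_empty power2_eq_square)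

lemma cond_mag_insert_le:
  assumes "finite T" "T \<subseteq> V" "u \<in> V" "b \<in> V"
  shows "cond_mag (insert b T) u \<le> cond_mag T u + cond_mag {b} u"
proof -
  define Z Nu Nb Nub where "Z = Zpin T" and "Nu = N1 T u" and "Nb = N1 T b" and "Nub = N2 T u b"
  have Z: "0 < Z" unfolding Z_def by (rule Zpin_pos[OF assms(2)])
  have Nb: "0 \<le> Nb" unfolding Nb_def by (rule griffiths_first[OF assms(2,4)])
  have cov: "0 \<le> Z * Nub - Nu * Nb"
    using griffiths_second[OF assms(2,3,4)] unfolding Z_def Nub_def Nu_def Nb_def by simp
  have halves: "(x / 2) / (y / 2) = x / y" for x y :: real
    by simp
  have "cond_mag (insert b T) u - cond_mag T u = (Nu + Nub) / (Z + Nb) - Nu / Z"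
    unfolding cond_mag_def pinned_sum_insert[OF assms(4)] mult_1_left halves Z_def Nu_def Nb_def Nub_def ..
  also have "\<dots> = (Z * Nub - Nu * Nb) / (Z * (Z + Nb))"
    using Z Nb by (simp add: field_simps)
  also have "\<dots> \<le> (Z * Nub - Nu * Nb) / Z\<^sup>2"
  proof (rule divide_left_mono)
    show "Z\<^sup>2 \<le> Z * (Z + Nb)" using Z Nb by (simp add: power2_eq_square algebra_simps)
    show "0 < Z * (Z + Nb) * Z\<^sup>2" using Z Nb by simp
  qed (rule cov)
  also have "\<dots> = trunc_corr T u b"
    unfolding trunc_corr_def Z_def Nub_def Nu_def Nb_def ..
  also have "\<dots> \<le> trunc_corr {} u b"
    by (rule trunc_corr_le_unpinned[OF assms])
  also have "\<dots> = cond_mag {b} u"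
    by (rule cond_mag_singleton[OF assms(3,4), symmetric])
  finally show ?thesis by simp
qed

lemma cond_mag_subadditive:
  fixes k :: nat and v :: "nat \<Rightarrow> 'v"
  assumes "u \<in> V" "\<forall>i\<in>{1..k}. v i \<in> V"
  shows "cond_mag (v ` {1..k}) u \<le> (\<Sum>i=1..k. cond_mag {v i} u)"
  using assms(2)
proof (induction k)
  case 0
  then show ?case using cond_mag_empty[OF assms(1)] by simp
next
  case (Suc k)
  have "v ` {1..Suc k} = insert (v (Suc k)) (v ` {1..k})"
    by (auto simp: atLeastAtMostSuc_conv)
  moreover have "cond_mag (insert (v (Suc k)) (v ` {1..k})) u \<le> cond_mag (v ` {1..k}) u + cond_mag {v (Suc k)} u"
    using Suc.prems assms(1) by (intro cond_mag_insert_le) auto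
  ultimately show ?case using Suc by simp
qed

lemma ising_cond_exp_eq_cond_mag:
  assumes "{\<sigma> \<in> configs V. A \<sigma>} = pinned V T"
  shows "ising_cond_exp V E J (\<lambda>\<sigma>. real_of_int (\<sigma> u)) A = cond_mag T u"
proof -
  have "ising_Z V E J = Zpin {}"
    by (simp add: ising_Z_def pinned_sum_def pinned_def)
  then have "0 < ising_Z V E J" using Zpin_pos[of "{}"] by simp
  then show ?thesis
    by (simp add: ising_cond_exp_def ising_mu_def assms pinned_sum_def cond_mag_def
        sum_divide_distrib[symmetric])
qed

end

end

theorem corollary2p6:
  fixes V :: "'a set" and E :: "'a set set" and J :: "'a set \<Rightarrow> real"
    and u :: 'a and k :: nat and v :: "nat \<Rightarrow> 'a"
  assumes "graph V E"
    and "\<forall>e\<in>E. J e \<ge> 0"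
    and "u \<in> V"
    and "\<forall>i\<in>{1..k}. v i \<in> V"
  shows "ising_cond_exp V E J (\<lambda>\<sigma>. real_of_int (\<sigma> u)) (\<lambda>\<sigma>. \<forall>i\<in>{1..k}. \<sigma> (v i) = 1)
         \<le> (\<Sum>i=1..k. ising_cond_exp V E J (\<lambda>\<sigma>. real_of_int (\<sigma> u)) (\<lambda>\<sigma>. \<sigma> (v i) = 1))"
proof -
  have "ising_cond_exp V E J (\<lambda>\<sigma>. real_of_int (\<sigma> u)) (\<lambda>\<sigma>. \<forall>i\<in>{1..k}. \<sigma> (v i) = 1)
      = cond_mag V E J (v ` {1..k}) u"
    by (rule ising_cond_exp_eq_cond_mag[OF assms(1,2)]) (auto simp: pinned_def)
  moreover have "ising_cond_exp V E J (\<lambda>\<sigma>. real_of_int (\<sigma> u)) (\<lambda>\<sigma>. \<sigma> (v i) = 1) = cond_mag V E J {v i} u"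
    for i by (rule ising_cond_exp_eq_cond_mag[OF assms(1,2)]) (auto simp: pinned_def)
  ultimately show ?thesis
    using cond_mag_subadditive[OF assms] by simp
qed

end
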